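(* Let $m\ge 1$, $p\ge 2$, let $a_1,\dots,a_p\in\mathbb C$, and let $b_{j,k}\in\mathbb C\setminus\{0,-1,-2,\dots\}$ for $1\le j\le p-1$, $1\le k\le m$. Then the series $F_C^{p,m}(a,B;x)$ converges absolutely at every point of $$\mathbb D=\{x\in\mathbb C^m \mid \sqrt[p]{|x_1|}+\cdots+\sqrt[p]{|x_m|}<1\}.$$
   Context: Pochhammer's symbol: $(\alpha,n)=\alpha(\alpha+1)\cdots(\alpha+n-1)=\Gamma(\alpha+n)/\Gamma(\alpha)$, $\mathbb N=\{0,1,2,\dots\}$. Parameters: $a={}^t(a_1,\dots,a_p)$ and $B=(b_{j,k})_{1\le j\le p,\,1\le k\le m}$ with the convention $b_{p,k}=1$ for all $k$. The series is $$F_C^{p,m}(a,B;x)=\sum_{(n_1,\dots,n_m)\in\mathbb N^m}\frac{(a_1,n_1+\cdots+n_m)\cdots(a_p,n_1+\cdots+n_m)}{\prod_{k=1}^m\{(b_{1,k},n_k)\cdots(b_{p-1,k},n_k)\,n_k!\}}x_1^{n_1}\cdots x_m^{n_m}.$$ *)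

theory Defs
  imports "HOL-Analysis.Analysis"
begin

text \<open>Multi-indices (n_1,...,n_m) in N^m, represented as functions nat => nat
  supported in {1..m}.\<close>
definition multi_idx :: "nat \<Rightarrow> (nat \<Rightarrow> nat) set" where
  "multi_idx m = {n. \<forall>k. k \<notin> {1..m} \<longrightarrow> n k = 0}"

text \<open>General term of F_C^{p,m}(a,B;x). Parameters a j (1<=j<=p),
  b j k (1<=j<=p-1, 1<=k<=m; the convention b_{p,k}=1 is built in via n_k!),
  x k (1<=k<=m).\<close>
definition FC_term :: "nat \<Rightarrow> nat \<Rightarrow> (nat \<Rightarrow> complex) \<Rightarrow> (nat \<Rightarrow> nat \<Rightarrow> complex)
    \<Rightarrow> (nat \<Rightarrow> complex) \<Rightarrow> (nat \<Rightarrow> nat) \<Rightarrow> complex" where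
  "FC_term p m a b x n =
     (\<Prod>j=1..p. pochhammer (a j) (\<Sum>k=1..m. n k)) /
     (\<Prod>k=1..m. (\<Prod>j=1..p-1. pochhammer (b j k) (n k)) * fact (n k))
     * (\<Prod>k=1..m. x k ^ n k)"

definition FC_domain :: "nat \<Rightarrow> nat \<Rightarrow> (nat \<Rightarrow> complex) set" where
  "FC_domain p m = {x. (\<Sum>k=1..m. root p (cmod (x k))) < 1}"

end

theory Submission
  imports Defs
begin

text \<open>For every \<open>\<theta> > 1\<close> the ratio test shows that a Pochhammer symbol grows at most like
  \<open>C N! \<theta>^N\<close> and, if it never vanishes, at least like \<open>N! \<theta>^(-N) / C\<close>.
  Writing \<open>|x_k| = r_k^p\<close> and \<open>N = n_1 + \<dots> + n_m\<close>, the general term is therefore bounded by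
  \<open>C \<theta>^((2p-1)N) (N! \<Prod> r_k^n_k / \<Prod> n_k!)^p\<close>, and by the multinomial theorem the bracket is
  at most \<open>s^N\<close> with \<open>s = \<Sum> r_k < 1\<close>. Choosing \<open>\<theta>\<close> close to 1 gives a summable geometric
  majorant \<open>C (\<theta>^(2p-1) s^p)^N\<close>.\<close>

lemma eventually_contracting_imp_bounded:
  fixes f :: "nat \<Rightarrow> real"
  assumes "c < 1" and "eventually (\<lambda>n. f (Suc n) \<le> c * f n) sequentially"
    and "\<And>n. 0 \<le> f n"
  shows "\<exists>K>0. \<forall>n. f n \<le> K"
proof -
  obtain N where "\<And>n. n \<ge> N \<Longrightarrow> f (Suc n) \<le> c * f n"
    using assms(2) by (auto simp: eventually_sequentially)
  then have "summable f"
    by (intro summable_ratio_test[OF assms(1)]) (simp add: assms(3))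
  then have "Bseq f"
    using convergent_imp_Bseq convergentI summable_LIMSEQ_zero by blast
  then show ?thesis
    by (force simp: Bseq_def abs_le_iff)
qed

lemma eventually_ge_real_sequentially: "eventually (\<lambda>n. C \<le> real n) sequentially"
  using filterlim_real_sequentially by (simp add: filterlim_at_top)

lemma eventually_norm_add_of_nat_le:
  fixes a :: "'a :: real_normed_algebra_1"
  assumes "1 < \<kappa>"
  shows "eventually (\<lambda>n. norm (a + of_nat n) \<le> \<kappa> * (real n + 1)) sequentially"
  using eventually_ge_real_sequentially[of "norm a / (\<kappa> - 1)"]
proof eventually_elim
  case (elim n)
  then have "norm a \<le> (\<kappa> - 1) * real n"
    using assms by (simp add: field_simps)
  then show ?case
    using norm_triangle_ineq[of a "of_nat n"] assms by (simp add: algebra_simps)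
qed

lemma eventually_of_nat_le_norm_add:
  fixes b :: "'a :: real_normed_algebra_1"
  assumes "1 < \<kappa>"
  shows "eventually (\<lambda>n. real n + 1 \<le> \<kappa> * norm (b + of_nat n)) sequentially"
  using eventually_ge_real_sequentially[of "(1 + \<kappa> * norm b) / (\<kappa> - 1)"]
proof eventually_elim
  case (elim n)
  then have "1 + \<kappa> * norm b \<le> (\<kappa> - 1) * real n"
    using assms by (simp add: field_simps)
  moreover have "real n - norm b \<le> norm (b + of_nat n)"
    using norm_diff_ineq[of "of_nat n :: 'a" b] by (simp add: add.commute)
  then have "\<kappa> * (real n - norm b) \<le> \<kappa> * norm (b + of_nat n)"
    using assms by (intro mult_left_mono) simp_all
  ultimately show ?case
    by (simp add: algebra_simps)
qed

lemma norm_pochhammer_le_fact_geometric: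
  fixes a :: "'a :: real_normed_field"
  assumes "1 < \<theta>"
  shows "\<exists>C>0. \<forall>N. norm (pochhammer a N) \<le> C * (fact N * \<theta> ^ N)"
proof -
  define f where "f N = norm (pochhammer a N) / (fact N * \<theta> ^ N)" for N
  define c where "c = (1 + 1 / \<theta>) / 2"
  have "1 < c * \<theta>" "c < 1"
    using assms by (simp_all add: c_def field_simps)
  have "eventually (\<lambda>n. f (Suc n) \<le> c * f n) sequentially"
    using eventually_norm_add_of_nat_le[OF \<open>1 < c * \<theta>\<close>, of a]
  proof eventually_elim
    case (elim n)
    have "norm (pochhammer a (Suc n)) = norm (pochhammer a n) * norm (a + of_nat n)"
      unfolding pochhammer_Suc by (rule norm_mult)
    then have "f (Suc n) = f n * (norm (a + of_nat n) / ((real n + 1) * \<theta>))"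
      using assms by (simp add: f_def field_simps)
    also have "\<dots> \<le> f n * c"
      using elim assms
      by (intro mult_left_mono) (simp_all add: f_def divide_le_eq mult_ac)
    finally show ?case by (simp add: mult.commute)
  qed
  moreover have "0 \<le> f N" for N
    using assms by (simp add: f_def)
  ultimately obtain K where "K > 0" "\<And>N. f N \<le> K"
    using eventually_contracting_imp_bounded[OF \<open>c < 1\<close>] by blast
  then show ?thesis
    using assms by (intro exI[of _ K]) (auto simp: f_def field_simps)
qed

lemma fact_le_norm_pochhammer_geometric:
  fixes b :: "'a :: real_normed_field"
  assumes "1 < \<theta>" and "\<And>l. b \<noteq> - of_nat l"
  shows "\<exists>C>0. \<forall>n. fact n \<le> C * (\<theta> ^ n * norm (pochhammer b n))"
proof -
  have nonzero: "pochhammer b n \<noteq> 0" for n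
    using assms(2) by (auto simp: pochhammer_eq_0_iff)
  define f where "f n = fact n / (\<theta> ^ n * norm (pochhammer b n))" for n
  define c where "c = (1 + 1 / \<theta>) / 2"
  have "1 < c * \<theta>" "c < 1"
    using assms by (simp_all add: c_def field_simps)
  have "eventually (\<lambda>n. f (Suc n) \<le> c * f n) sequentially"
    using eventually_of_nat_le_norm_add[OF \<open>1 < c * \<theta>\<close>, of b]
  proof eventually_elim
    case (elim n)
    have "b + of_nat n \<noteq> 0"
      using nonzero[of "Suc n"] by (auto simp: pochhammer_Suc)
    moreover have "norm (pochhammer b (Suc n)) = norm (pochhammer b n) * norm (b + of_nat n)"
      unfolding pochhammer_Suc by (rule norm_mult)
    ultimately have "f (Suc n) = f n * ((real n + 1) / (\<theta> * norm (b + of_nat n)))"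
      using assms nonzero[of n] by (simp add: f_def field_simps)
    also have "\<dots> \<le> f n * c"
      using elim assms \<open>b + of_nat n \<noteq> 0\<close>
      by (intro mult_left_mono) (simp_all add: f_def field_simps)
    finally show ?case by (simp add: mult.commute)
  qed
  moreover have "0 \<le> f n" for n
    using assms by (simp add: f_def)
  ultimately obtain K where "K > 0" "\<And>n. f n \<le> K"
    using eventually_contracting_imp_bounded[OF \<open>c < 1\<close>] by blast
  then show ?thesis
    using assms nonzero by (intro exI[of _ K]) (auto simp: f_def field_simps)
qed

lemma ex_bound_prod:
  fixes f g :: "'j \<Rightarrow> 'b \<Rightarrow> real"
  assumes "finite J" and "\<And>j. j \<in> J \<Longrightarrow> \<exists>C>0. \<forall>n. f j n \<le> C * g j n"
    and "\<And>j n. j \<in> J \<Longrightarrow> 0 \<le> f j n"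
  shows "\<exists>C>0. \<forall>n. (\<Prod>j\<in>J. f j n) \<le> C * (\<Prod>j\<in>J. g j n)"
proof -
  obtain C where C: "\<And>j. j \<in> J \<Longrightarrow> C j > 0 \<and> (\<forall>n. f j n \<le> C j * g j n)"
    using assms(2) by metis
  have "(\<Prod>j\<in>J. f j n) \<le> (\<Prod>j\<in>J. C j) * (\<Prod>j\<in>J. g j n)" for n
    unfolding prod.distrib[symmetric] using C assms(3) by (intro prod_mono) auto
  moreover have "(\<Prod>j\<in>J. C j) > 0"
    using C by (intro prod_pos) auto
  ultimately show ?thesis by blast
qed

lemma binomial_term_le_power:
  fixes x y :: real
  assumes "0 \<le> x" and "0 \<le> y"
  shows "of_nat ((i + k) choose i) * x ^ i * y ^ k \<le> (x + y) ^ (i + k)"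
proof -
  have "of_nat ((i + k) choose i) * x ^ i * y ^ (i + k - i)
      \<le> (\<Sum>l\<le>i + k. of_nat ((i + k) choose l) * x ^ l * y ^ (i + k - l))"
    using assms by (intro member_le_sum) auto
  then show ?thesis
    by (simp add: binomial_ring)
qed

lemma fact_sum_mult_prod_power_le:
  fixes r :: "'a \<Rightarrow> real" and n :: "'a \<Rightarrow> nat"
  assumes "finite K" and "\<And>k. k \<in> K \<Longrightarrow> 0 \<le> r k"
  shows "fact (\<Sum>k\<in>K. n k) * (\<Prod>k\<in>K. r k ^ n k)
    \<le> (\<Sum>k\<in>K. r k) ^ (\<Sum>k\<in>K. n k) * (\<Prod>k\<in>K. fact (n k))"
  using assms
proof (induction K rule: finite_induct)
  case empty
  then show ?case by simp
next
  case (insert i K)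
  define N where "N = (\<Sum>k\<in>K. n k)"
  define S where "S = (\<Sum>k\<in>K. r k)"
  define P where "P = (\<Prod>k\<in>K. r k ^ n k)"
  define F where "F = (\<Prod>k\<in>K. fact (n k) :: real)"
  define B where "B = of_nat ((n i + N) choose n i) * r i ^ n i"
  have IH: "fact N * P \<le> S ^ N * F"
    using insert by (simp add: N_def S_def P_def F_def)
  have "r i \<ge> 0" "S \<ge> 0" "F \<ge> 0" "B \<ge> 0"
    using insert by (auto simp: S_def F_def B_def intro: sum_nonneg prod_nonneg)
  have "(fact (n i + N) :: real) = of_nat ((n i + N) choose n i) * fact (n i) * fact N"
    using binomial_fact[of "n i" "n i + N", where 'a = real] by simp
  then have "fact (n i + N) * (r i ^ n i * P) = B * fact (n i) * (fact N * P)"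
    by (simp add: B_def mult_ac)
  also have "\<dots> \<le> B * fact (n i) * (S ^ N * F)"
    using IH \<open>B \<ge> 0\<close> by (intro mult_left_mono) auto
  also have "\<dots> = (B * S ^ N) * (fact (n i) * F)"
    by (simp add: mult_ac)
  also have "\<dots> \<le> (r i + S) ^ (n i + N) * (fact (n i) * F)"
    using binomial_term_le_power[OF \<open>r i \<ge> 0\<close> \<open>S \<ge> 0\<close>] \<open>F \<ge> 0\<close>
    by (intro mult_right_mono) (auto simp: B_def)
  finally show ?case
    using insert by (simp add: N_def S_def P_def F_def mult_ac)
qed

lemma ex_gt_1_power_mult_less_1:
  fixes t :: real
  assumes "0 < e" and "0 \<le> t" and "t < 1"
  shows "\<exists>\<theta>>1. \<theta> ^ e * t < 1"
proof (intro exI conjI)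
  show "1 < root e (2 / (1 + t))"
    using assms by (simp add: real_root_gt_1_iff)
  show "root e (2 / (1 + t)) ^ e * t < 1"
    using assms by (simp add: field_simps)
qed

lemma inj_on_restrict_finite_support:
  "inj_on (\<lambda>n. restrict n K) {n. \<forall>k. k \<notin> K \<longrightarrow> n k = 0}"
proof (rule inj_onI, rule ext)
  fix u v k
  assume "u \<in> {n. \<forall>k. k \<notin> K \<longrightarrow> n k = 0}" "v \<in> {n. \<forall>k. k \<notin> K \<longrightarrow> n k = 0}"
    and "restrict u K = restrict v K"
  then show "u k = v k"
    by (cases "k \<in> K") (auto dest: fun_cong[where x = k])
qed

lemma sum_PiE_geometric_le:
  fixes q :: real
  assumes "finite K" and "0 \<le> q" and "q < 1"
  shows "(\<Sum>n\<in>PiE K (\<lambda>_. {..L}). q ^ (\<Sum>k\<in>K. n k)) \<le> (1 / (1 - q)) ^ card K"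
proof -
  have "(\<Sum>n\<in>PiE K (\<lambda>_. {..L}). q ^ (\<Sum>k\<in>K. n k)) = (\<Prod>k\<in>K. \<Sum>i\<le>L. q ^ i)"
    unfolding power_sum using assms by (subst prod_sum_PiE) auto
  also have "\<dots> \<le> (\<Prod>k\<in>K. 1 / (1 - q))"
  proof (rule prod_mono)
    have "(\<Sum>i\<le>L. q ^ i) \<le> (\<Sum>i. q ^ i)"
      using assms by (intro sum_le_suminf summable_geometric) auto
    then show "0 \<le> (\<Sum>i\<le>L. q ^ i) \<and> (\<Sum>i\<le>L. q ^ i) \<le> 1 / (1 - q)"
      using assms by (simp add: suminf_geometric sum_nonneg)
  qed
  finally show ?thesis
    by simp
qed

lemma geometric_summable_on_finite_support:
  fixes q :: real
  assumes "finite K" and "0 \<le> q" and "q < 1"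
  shows "(\<lambda>n. q ^ (\<Sum>k\<in>K. n k)) summable_on {n. \<forall>k. k \<notin> K \<longrightarrow> n k = 0}"
    (is "?g summable_on ?M")
proof (rule nonneg_bdd_above_summable_on)
  show "0 \<le> ?g n" for n
    using assms by simp
  show "bdd_above (sum ?g ` {F. F \<subseteq> ?M \<and> finite F})"
  proof (rule bdd_aboveI2)
    fix F assume "F \<in> {F. F \<subseteq> ?M \<and> finite F}"
    then have "F \<subseteq> ?M" and "finite F" by auto
    define L where "L = (\<Sum>n\<in>F. \<Sum>k\<in>K. n k)"
    have "?g (restrict n K) = ?g n" for n
      by (simp add: restrict_def)
    then have "sum ?g F = sum ?g ((\<lambda>n. restrict n K) ` F)"
      using inj_on_subset[OF inj_on_restrict_finite_support \<open>F \<subseteq> ?M\<close>]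
      by (simp add: sum.reindex)
    also have "\<dots> \<le> sum ?g (PiE K (\<lambda>_. {..L}))"
    proof (rule sum_mono2)
      have "n k \<le> L" if "n \<in> F" "k \<in> K" for n k
      proof -
        have "n k \<le> (\<Sum>k\<in>K. n k)"
          using that assms by (intro member_le_sum) auto
        also have "\<dots> \<le> L"
          unfolding L_def using that \<open>finite F\<close> by (intro member_le_sum) auto
        finally show ?thesis .
      qed
      then show "(\<lambda>n. restrict n K) ` F \<subseteq> PiE K (\<lambda>_. {..L})"
        by auto
    qed (use assms in \<open>simp_all add: finite_PiE\<close>)
    also have "\<dots> \<le> (1 / (1 - q)) ^ card K"
      using sum_PiE_geometric_le[OF assms] .
    finally show "sum ?g F \<le> (1 / (1 - q)) ^ card K" .
  qed
qed

lemma prod_norm_pochhammer_le: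
  fixes a :: "'j \<Rightarrow> 'a :: real_normed_field"
  assumes "finite J" and "1 < \<theta>"
  shows "\<exists>C>0. \<forall>N. (\<Prod>j\<in>J. norm (pochhammer (a j) N)) \<le> C * (fact N * \<theta> ^ N) ^ card J"
  using ex_bound_prod[OF assms(1), of "\<lambda>j N. norm (pochhammer (a j) N)" "\<lambda>j N. fact N * \<theta> ^ N"]
  by (simp add: norm_pochhammer_le_fact_geometric[OF assms(2)])

lemma prod_fact_power_le_prod_norm_pochhammer:
  fixes b :: "'j \<Rightarrow> 'k \<Rightarrow> 'a :: real_normed_field"
  assumes "finite J" and "finite K" and "1 < \<theta>"
    and "\<And>j k l. j \<in> J \<Longrightarrow> k \<in> K \<Longrightarrow> b j k \<noteq> - of_nat l"
  shows "\<exists>C>0. \<forall>n. (\<Prod>k\<in>K. fact (n k) ^ card J)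
    \<le> C * (\<Prod>k\<in>K. (\<theta> ^ n k) ^ card J * (\<Prod>j\<in>J. norm (pochhammer (b j k) (n k))))"
proof -
  have "\<exists>C>0. \<forall>\<nu>. fact \<nu> ^ card J
      \<le> C * ((\<theta> ^ \<nu>) ^ card J * (\<Prod>j\<in>J. norm (pochhammer (b j k) \<nu>)))"
    if "k \<in> K" for k
    using ex_bound_prod[OF assms(1), of "\<lambda>j \<nu>. fact \<nu>" "\<lambda>j \<nu>. \<theta> ^ \<nu> * norm (pochhammer (b j k) \<nu>)"]
      fact_le_norm_pochhammer_geometric[OF assms(3) assms(4)[OF _ that]]
    by (simp add: prod.distrib)
  then have "\<exists>C>0. \<forall>n :: 'k \<Rightarrow> nat. fact (n k) ^ card J
      \<le> C * ((\<theta> ^ n k) ^ card J * (\<Prod>j\<in>J. norm (pochhammer (b j k) (n k))))"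
    if "k \<in> K" for k
    using that by blast
  then show ?thesis
    using ex_bound_prod[OF assms(2), of "\<lambda>k n. fact (n k) ^ card J"] by simp
qed

lemma norm_FC_term:
  assumes "0 < p"
  shows "norm (FC_term p m a b x n)
    = (\<Prod>j=1..p. norm (pochhammer (a j) (\<Sum>k=1..m. n k)))
      / ((\<Prod>k=1..m. \<Prod>j=1..p-1. norm (pochhammer (b j k) (n k))) * (\<Prod>k=1..m. fact (n k)))
      * (\<Prod>k=1..m. root p (norm (x k)) ^ n k) ^ p"
proof -
  have "(root p (norm (x k)) ^ n k) ^ p = norm (x k) ^ n k" for k
    using assms by (simp add: power_mult[symmetric] mult.commute[of _ p] power_mult)
  then have "(\<Prod>k=1..m. norm (x k) ^ n k) = (\<Prod>k=1..m. root p (norm (x k)) ^ n k) ^ p"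
    by (simp add: prod_power_distrib)
  then show ?thesis
    unfolding FC_term_def
    by (simp add: norm_mult norm_divide prod_norm[symmetric] norm_power prod.distrib)
qed

lemma norm_FC_term_le:
  fixes a :: "nat \<Rightarrow> complex" and b :: "nat \<Rightarrow> nat \<Rightarrow> complex" and x :: "nat \<Rightarrow> complex"
    and m :: nat and n :: "nat \<Rightarrow> nat"
  defines "N \<equiv> \<Sum>k=1..m. n k"
  assumes "0 < p" and "1 < \<theta>" and "0 < CA" and "0 < CB"
    and A: "(\<Prod>j=1..p. norm (pochhammer (a j) N)) \<le> CA * (fact N * \<theta> ^ N) ^ p"
    and B: "(\<Prod>k=1..m. fact (n k) ^ (p - 1))
      \<le> CB * (\<Prod>k=1..m. (\<theta> ^ n k) ^ (p - 1) * (\<Prod>j=1..p-1. norm (pochhammer (b j k) (n k))))"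
  shows "norm (FC_term p m a b x n)
    \<le> CA * CB * (\<theta> ^ (p + (p - 1)) * (\<Sum>k=1..m. root p (norm (x k))) ^ p) ^ N"
proof -
  define s where "s = (\<Sum>k=1..m. root p (norm (x k)))"
  define D where "D = (\<Prod>k=1..m. \<Prod>j=1..p-1. norm (pochhammer (b j k) (n k)))"
  define F where "F = (\<Prod>k=1..m. fact (n k) :: real)"
  define R where "R = (\<Prod>k=1..m. root p (norm (x k)) ^ n k)"
  have "0 < F" "0 \<le> R"
    by (simp_all add: F_def R_def prod_pos prod_nonneg real_root_ge_zero)
  have multinomial: "fact N * R \<le> s ^ N * F"
    unfolding N_def R_def s_def F_def
    by (rule fact_sum_mult_prod_power_le) (simp_all add: real_root_ge_zero)
  define D0 where "D0 = F ^ (p - 1) / (CB * (\<theta> ^ N) ^ (p - 1))"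
  have "0 < D0"
    using \<open>0 < F\<close> \<open>0 < CB\<close> \<open>1 < \<theta>\<close> by (simp add: D0_def)
  have "F ^ (p - 1) \<le> CB * (\<theta> ^ N) ^ (p - 1) * D"
    using B by (simp add: F_def D_def N_def prod.distrib power_sum prod_power_distrib mult_ac)
  then have "D0 \<le> D"
    using \<open>0 < CB\<close> \<open>1 < \<theta>\<close> by (simp add: D0_def pos_divide_le_eq mult_ac)
  have "norm (FC_term p m a b x n) = (\<Prod>j=1..p. norm (pochhammer (a j) N)) / (D * F) * R ^ p"
    using norm_FC_term[OF assms(2)] by (simp add: N_def D_def F_def R_def)
  also have "\<dots> \<le> CA * (fact N * \<theta> ^ N) ^ p / (D * F) * R ^ p"
    using A \<open>0 \<le> R\<close> \<open>0 < D0\<close> \<open>D0 \<le> D\<close> \<open>0 < F\<close>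
    by (intro mult_right_mono divide_right_mono) auto
  also have "\<dots> \<le> CA * (fact N * \<theta> ^ N) ^ p / (D0 * F) * R ^ p"
    using \<open>0 \<le> R\<close> \<open>0 < D0\<close> \<open>D0 \<le> D\<close> \<open>0 < F\<close> \<open>0 < CA\<close> \<open>1 < \<theta>\<close>
    by (intro mult_right_mono divide_left_mono mult_right_mono) auto
  also have "\<dots> = CA * CB * (\<theta> ^ N) ^ (p + (p - 1)) * (fact N * R / F) ^ p"
  proof -
    obtain q where "p = Suc q"
      using assms(2) gr0_conv_Suc by blast
    then show ?thesis
      using \<open>0 < F\<close> \<open>0 < CB\<close> \<open>1 < \<theta>\<close>
      by (simp add: D0_def field_simps power_mult_distrib power_add)
  qed
  also have "\<dots> \<le> CA * CB * (\<theta> ^ N) ^ (p + (p - 1)) * (s ^ N) ^ p"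
    using multinomial \<open>0 < F\<close> \<open>0 \<le> R\<close> \<open>0 < CA\<close> \<open>0 < CB\<close> \<open>1 < \<theta>\<close>
    by (intro mult_left_mono power_mono) (simp_all add: divide_le_eq mult.commute)
  also have "\<dots> = CA * CB * (\<theta> ^ (p + (p - 1)) * s ^ p) ^ N"
    by (simp add: power_mult_distrib power_mult[symmetric] mult.commute)
  finally show ?thesis
    by (simp add: s_def)
qed

lemma norm_FC_term_le_geometric:
  fixes a :: "nat \<Rightarrow> complex" and b :: "nat \<Rightarrow> nat \<Rightarrow> complex" and x :: "nat \<Rightarrow> complex"
  assumes "0 < p"
    and b: "\<And>j k (l::nat). j \<in> {1..p-1} \<Longrightarrow> k \<in> {1..m} \<Longrightarrow> b j k \<noteq> - of_nat l"
    and "x \<in> FC_domain p m"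
  shows "\<exists>C Q. 0 \<le> Q \<and> Q < 1 \<and> (\<forall>n. norm (FC_term p m a b x n) \<le> C * Q ^ (\<Sum>k=1..m. n k))"
proof -
  define s where "s = (\<Sum>k=1..m. root p (norm (x k)))"
  have "0 \<le> s" "s < 1"
    using assms(3) by (simp_all add: s_def FC_domain_def sum_nonneg real_root_ge_zero)
  then have "0 \<le> s ^ p" "s ^ p < 1"
    using assms(1) by (simp_all add: power_less_one_iff)
  then obtain \<theta> where "\<theta> > 1" and Q_less_1: "\<theta> ^ (p + (p - 1)) * s ^ p < 1"
    using ex_gt_1_power_mult_less_1[of "p + (p - 1)"] assms(1) by auto
  obtain CA where "CA > 0"
    and A: "\<And>N. (\<Prod>j=1..p. norm (pochhammer (a j) N)) \<le> CA * (fact N * \<theta> ^ N) ^ p"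
    using prod_norm_pochhammer_le[of "{1..p}" \<theta> a] \<open>\<theta> > 1\<close> by auto
  obtain CB where "CB > 0"
    and B: "\<And>n. (\<Prod>k=1..m. fact (n k) ^ (p - 1))
      \<le> CB * (\<Prod>k=1..m. (\<theta> ^ n k) ^ (p - 1) * (\<Prod>j=1..p-1. norm (pochhammer (b j k) (n k))))"
    using prod_fact_power_le_prod_norm_pochhammer[of "{1..p-1}" "{1..m}" \<theta> b] \<open>\<theta> > 1\<close> b
    by auto
  show ?thesis
  proof (intro exI conjI allI)
    fix n :: "nat \<Rightarrow> nat"
    show "norm (FC_term p m a b x n) \<le> CA * CB * (\<theta> ^ (p + (p - 1)) * s ^ p) ^ (\<Sum>k=1..m. n k)"
      using norm_FC_term_le[OF assms(1) \<open>\<theta> > 1\<close> \<open>CA > 0\<close> \<open>CB > 0\<close> A B] by (simp add: s_def)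
  qed (use \<open>0 \<le> s ^ p\<close> \<open>\<theta> > 1\<close> Q_less_1 in auto)
qed

theorem mainTheorem1:
  fixes m p :: nat and a :: "nat \<Rightarrow> complex" and b :: "nat \<Rightarrow> nat \<Rightarrow> complex"
    and x :: "nat \<Rightarrow> complex"
  assumes "m \<ge> 1" and "p \<ge> 2"
    and "\<And>j k (l::nat). j \<in> {1..p-1} \<Longrightarrow> k \<in> {1..m} \<Longrightarrow> b j k \<noteq> - of_nat l"
    and "x \<in> FC_domain p m"
  shows "(\<lambda>n. norm (FC_term p m a b x n)) summable_on multi_idx m"
proof -
  have "0 < p"
    using assms(2) by simp
  obtain C Q where "0 \<le> Q" "Q < 1"
    and bound: "\<And>n. norm (FC_term p m a b x n) \<le> C * Q ^ (\<Sum>k=1..m. n k)"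
    using norm_FC_term_le_geometric[where a = a and b = b, OF \<open>0 < p\<close> assms(3,4)] by blast
  have "(\<lambda>n. C * Q ^ (\<Sum>k=1..m. n k)) summable_on multi_idx m"
    unfolding multi_idx_def
    using geometric_summable_on_finite_support[OF _ \<open>0 \<le> Q\<close> \<open>Q < 1\<close>, of "{1..m}"]
    by (intro summable_on_cmult_right) simp
  then show ?thesis
    by (rule summable_on_comparison_test) (use bound in auto)
qed

end
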